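(* Let $p_n:\mathrm{Br}_n\to\widehat{\mathrm S}_n$ be the homomorphism defined on generators by $\sigma_{i,i+1}\mapsto((i\ i{+}1),1)$. Then there is a short exact sequence $1\to\widehat{\mathrm{PBr}}_n\to\mathrm{Br}_n\xrightarrow{p_n}\widehat{\mathrm S}_n\to1$, i.e. $p_n$ is surjective with kernel $\widehat{\mathrm{PBr}}_n$.
   Context: $n\ge2$. $\widehat{\mathrm S}_n=\{(\sigma,d)\in\mathrm S_n\times\mathbb Z: d\text{ odd}\iff\operatorname{sgn}\sigma=-1\}$. $\mathrm{Br}_n$ is the braid group with Artin generators $\sigma_{i,i+1}$; $\mathrm{PBr}_n=\pi_1(\mathrm{Conf}_n(\mathbb C))$ the pure braid group. With $q_n:\mathrm{Conf}_n(\mathbb C)\to\mathbb C^*$, $q_n(x)=\prod_{i<j}(x_i-x_j)$, the Milnor fiber is $F_n=q_n^{-1}(1)$, and $\widehat{\mathrm{PBr}}_n:=\pi_1(F_n)$, identified with the kernel of $\pi_1(q_n):\mathrm{PBr}_n\to\mathbb Z$ (which sends each standard generator $a_{i,j}$ to $1$). *)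

theory Defs
  imports "HOL-Algebra.Algebra" "HOL-Combinatorics.Permutations" "HOL-Combinatorics.Transposition"
begin

text \<open>Letters: (i, True) stands for the Artin generator sigma_{i,i+1}, (i, False) for its
inverse, with 1 <= i < n.  Braid words are lists of letters.\<close>

type_synonym bletter = "nat \<times> bool"
type_synonym bword = "bletter list"

definition valid_word :: "nat \<Rightarrow> bword \<Rightarrow> bool" where
  "valid_word n w \<longleftrightarrow> (\<forall>l\<in>set w. 1 \<le> fst l \<and> fst l < n)"

inductive braid_eq :: "nat \<Rightarrow> bword \<Rightarrow> bword \<Rightarrow> bool" for n where
  refl: "valid_word n w \<Longrightarrow> braid_eq n w w"
| sym: "braid_eq n v w \<Longrightarrow> braid_eq n w v"
| trans: "braid_eq n u v \<Longrightarrow> braid_eq n v w \<Longrightarrow> braid_eq n u w"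
| ctxt: "braid_eq n v w \<Longrightarrow> valid_word n a \<Longrightarrow> valid_word n b \<Longrightarrow> braid_eq n (a @ v @ b) (a @ w @ b)"
| cancel: "1 \<le> i \<Longrightarrow> i < n \<Longrightarrow> braid_eq n [(i, e), (i, \<not> e)] []"
| far_comm: "1 \<le> i \<Longrightarrow> i < n \<Longrightarrow> 1 \<le> j \<Longrightarrow> j < n \<Longrightarrow> i + 2 \<le> j \<Longrightarrow>
    braid_eq n [(i, True), (j, True)] [(j, True), (i, True)]"
| braid: "1 \<le> i \<Longrightarrow> i + 1 < n \<Longrightarrow>
    braid_eq n [(i, True), (i+1, True), (i, True)] [(i+1, True), (i, True), (i+1, True)]"

definition braid_class :: "nat \<Rightarrow> bword \<Rightarrow> bword set" where
  "braid_class n w = {v. braid_eq n w v}"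

definition Br :: "nat \<Rightarrow> bword set monoid" where
  "Br n = \<lparr> carrier = {braid_class n w | w. valid_word n w},
            monoid.mult = (\<lambda>A B. \<Union>a\<in>A. \<Union>b\<in>B. braid_class n (a @ b)),
            one = braid_class n [] \<rparr>"

definition rep :: "bword set \<Rightarrow> bword" where
  "rep A = (SOME w. w \<in> A)"

definition hatS :: "nat \<Rightarrow> ((nat \<Rightarrow> nat) \<times> int) monoid" where
  "hatS n = \<lparr> carrier = {(s, d). s permutes {1..n} \<and> (odd d \<longleftrightarrow> sign s = -1)},
             monoid.mult = (\<lambda>(s, d) (t, e). (s \<circ> t, d + e)),
             one = (id, 0) \<rparr>"

definition letter_img :: "bletter \<Rightarrow> (nat \<Rightarrow> nat) \<times> int" where
  "letter_img l = (transpose (fst l) (fst l + 1), if snd l then 1 else -1)"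

definition word_img :: "bword \<Rightarrow> (nat \<Rightarrow> nat) \<times> int" where
  "word_img w = foldr (\<lambda>l (s, d). (fst (letter_img l) \<circ> s, snd (letter_img l) + d)) w (id, 0)"

definition p :: "nat \<Rightarrow> bword set \<Rightarrow> (nat \<Rightarrow> nat) \<times> int" where
  "p n A = word_img (rep A)"

definition PBr :: "nat \<Rightarrow> bword set set" where
  "PBr n = {A \<in> carrier (Br n). fst (word_img (rep A)) = id}"

definition exp_sum :: "bword \<Rightarrow> int" where
  "exp_sum w = (\<Sum>l\<leftarrow>w. if snd l then 1 else -1)"

text \<open>pi_1(q_n) : PBr_n -> Z.  Each standard generator
  a_{i,j} = sigma_{j-1} ... sigma_{i+1} sigma_i^2 sigma_{i+1}^{-1} ... sigma_{j-1}^{-1}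
  has exponent sum 2 and is sent to 1, so the map is half the exponent sum.\<close>
definition qhom :: "bword set \<Rightarrow> int" where
  "qhom A = exp_sum (rep A) div 2"

definition hatPBr :: "nat \<Rightarrow> bword set set" where
  "hatPBr n = {A \<in> PBr n. qhom A = 0}"

end

theory Submission
  imports Defs
begin

text \<open>The map p is well defined because the defining relations of Br n hold in hat-S n: a
  transposition is an involution, the exponents of cancelling letters add up to 0, and both sides
  of a commutation or braid relation have equal length, hence equal exponent sum.  It is onto
  because adjacent transpositions generate S n, and the square of sigma_1 maps to (id, 2), which
  corrects the integer part within its parity class.  A braid lies in the kernel iff it is pure and
  has exponent sum 0.  Since the sign of a word's permutation is (-1) to the length of the word,
  pure braids have even exponent sum, so this is the same as vanishing half exponent sum.\<close>

lemma valid_word_Nil [simp]: "valid_word n []"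
  by (simp add: valid_word_def)

lemma valid_word_append [simp]: "valid_word n (a @ b) \<longleftrightarrow> valid_word n a \<and> valid_word n b"
  by (auto simp: valid_word_def)

lemma braid_eq_valid: "braid_eq n v w \<Longrightarrow> valid_word n v \<and> valid_word n w"
  by (induction rule: braid_eq.induct) (auto simp: valid_word_def)

lemma braid_eq_append:
  assumes "braid_eq n a a'" "braid_eq n b b'"
  shows "braid_eq n (a @ b) (a' @ b')"
proof -
  have "valid_word n a'" "valid_word n b"
    using assms braid_eq_valid by blast+
  then have "braid_eq n (a @ b) (a' @ b)" "braid_eq n (a' @ b) (a' @ b')"
    using braid_eq.ctxt[OF assms(1) valid_word_Nil] braid_eq.ctxt[OF assms(2) _ valid_word_Nil]
    by simp_all
  then show ?thesis
    by (rule braid_eq.trans)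
qed

lemma braid_class_eq: "braid_eq n v w \<Longrightarrow> braid_class n v = braid_class n w"
  unfolding braid_class_def by (auto intro: braid_eq.trans braid_eq.sym)

lemma mem_braid_class: "valid_word n w \<Longrightarrow> w \<in> braid_class n w"
  by (simp add: braid_class_def braid_eq.refl)

lemma carrier_Br: "carrier (Br n) = {braid_class n w | w. valid_word n w}"
  by (simp add: Br_def)

lemma one_Br: "\<one>\<^bsub>Br n\<^esub> = braid_class n []"
  by (simp add: Br_def)

lemma carrier_BrE:
  assumes "A \<in> carrier (Br n)"
  obtains w where "valid_word n w" "A = braid_class n w"
  using assms by (auto simp: carrier_Br)

lemma braid_class_in_carrier_Br: "valid_word n w \<Longrightarrow> braid_class n w \<in> carrier (Br n)"
  by (auto simp: carrier_Br)

lemma mult_Br_braid_class: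
  assumes "valid_word n a" "valid_word n b"
  shows "braid_class n a \<otimes>\<^bsub>Br n\<^esub> braid_class n b = braid_class n (a @ b)"
proof -
  have well_defined: "braid_class n (a' @ b') = braid_class n (a @ b)"
    if "a' \<in> braid_class n a" "b' \<in> braid_class n b" for a' b'
  proof -
    have "braid_eq n a a'" "braid_eq n b b'"
      using that by (auto simp: braid_class_def)
    then show ?thesis
      by (metis braid_eq_append braid_class_eq)
  qed
  have "braid_class n a \<otimes>\<^bsub>Br n\<^esub> braid_class n b
     = (\<Union>a'\<in>braid_class n a. \<Union>b'\<in>braid_class n b. braid_class n (a' @ b'))"
    by (simp add: Br_def)
  also have "\<dots> = (\<Union>a'\<in>braid_class n a. \<Union>b'\<in>braid_class n b. braid_class n (a @ b))"
    using well_defined by (intro SUP_cong) auto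
  also have "\<dots> = braid_class n (a @ b)"
    using mem_braid_class[OF assms(1)] mem_braid_class[OF assms(2)] by blast
  finally show ?thesis .
qed

definition word_inverse :: "bword \<Rightarrow> bword" where
  "word_inverse w = rev (map (\<lambda>(i, e). (i, \<not> e)) w)"

lemma valid_word_inverse: "valid_word n w \<Longrightarrow> valid_word n (word_inverse w)"
  by (auto simp: valid_word_def word_inverse_def)

lemma braid_eq_word_inverse_append: "valid_word n w \<Longrightarrow> braid_eq n (word_inverse w @ w) []"
proof (induction w)
  case Nil
  then show ?case
    by (simp add: word_inverse_def braid_eq.refl)
next
  case (Cons l w)
  obtain i e where l: "l = (i, e)"
    by (cases l)
  have w: "valid_word n w" and i: "1 \<le> i" "i < n"
    using Cons.prems l by (auto simp: valid_word_def)
  have "braid_eq n (word_inverse w @ [(i, \<not> e), (i, e)] @ w) (word_inverse w @ [] @ w)"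
    using braid_eq.cancel[OF i, of "\<not> e"] valid_word_inverse[OF w] w by (intro braid_eq.ctxt) auto
  then show ?case
    using Cons.IH[OF w] l by (auto simp: word_inverse_def intro: braid_eq.trans)
qed

lemma group_Br: "group (Br n)"
proof (rule groupI)
  show "\<one>\<^bsub>Br n\<^esub> \<in> carrier (Br n)"
    by (simp add: one_Br braid_class_in_carrier_Br)
next
  fix A B assume "A \<in> carrier (Br n)" "B \<in> carrier (Br n)"
  then show "A \<otimes>\<^bsub>Br n\<^esub> B \<in> carrier (Br n)"
    by (elim carrier_BrE) (simp add: mult_Br_braid_class braid_class_in_carrier_Br)
next
  fix A B C assume "A \<in> carrier (Br n)" "B \<in> carrier (Br n)" "C \<in> carrier (Br n)"
  then show "A \<otimes>\<^bsub>Br n\<^esub> B \<otimes>\<^bsub>Br n\<^esub> C = A \<otimes>\<^bsub>Br n\<^esub> (B \<otimes>\<^bsub>Br n\<^esub> C)"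
    by (elim carrier_BrE) (simp add: mult_Br_braid_class)
next
  fix A assume "A \<in> carrier (Br n)"
  then show "\<one>\<^bsub>Br n\<^esub> \<otimes>\<^bsub>Br n\<^esub> A = A"
    by (elim carrier_BrE) (simp add: one_Br mult_Br_braid_class)
next
  fix A assume "A \<in> carrier (Br n)"
  then obtain w where w: "valid_word n w" "A = braid_class n w"
    by (rule carrier_BrE)
  then have "braid_class n (word_inverse w) \<otimes>\<^bsub>Br n\<^esub> A = \<one>\<^bsub>Br n\<^esub>"
    by (simp add: mult_Br_braid_class valid_word_inverse one_Br
        braid_class_eq[OF braid_eq_word_inverse_append])
  then show "\<exists>B\<in>carrier (Br n). B \<otimes>\<^bsub>Br n\<^esub> A = \<one>\<^bsub>Br n\<^esub>"
    using braid_class_in_carrier_Br[OF valid_word_inverse[OF w(1)]] by blast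
qed

definition parity_sign :: "(nat \<Rightarrow> nat) \<times> int \<Rightarrow> int" where
  "parity_sign x = sign (fst x) * (if even (snd x) then 1 else -1)"

lemma parity_sign_group_hom: "group_hom (sym_group n \<times>\<times> integer_group) sign_img parity_sign"
proof -
  have "parity_sign \<in> hom (sym_group n \<times>\<times> integer_group) sign_img"
  proof (rule homI)
    fix x
    show "parity_sign x \<in> carrier sign_img"
      by (cases "fst x" rule: sign_cases) (auto simp: parity_sign_def sign_img_def)
  next
    fix x y assume "x \<in> carrier (sym_group n \<times>\<times> integer_group)" "y \<in> carrier (sym_group n \<times>\<times> integer_group)"
    then have "permutation (fst x)" "permutation (fst y)"
      by (auto simp: sym_group_carrier')
    then show "parity_sign (x \<otimes>\<^bsub>sym_group n \<times>\<times> integer_group\<^esub> y)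
        = parity_sign x \<otimes>\<^bsub>sign_img\<^esub> parity_sign y"
      by (auto simp: parity_sign_def mult_DirProd' sym_group_mult sign_img_def sign_compose)
  qed
  then show ?thesis
    by (intro group_hom.intro group_hom_axioms.intro DirProd_group sym_group_is_group
        group_integer_group sign_img_is_group)
qed

lemma hatS_eq_kernel_parity_sign:
  "hatS n = (sym_group n \<times>\<times> integer_group)
     \<lparr>carrier := kernel (sym_group n \<times>\<times> integer_group) sign_img parity_sign\<rparr>"
proof -
  have parity: "(odd d \<longleftrightarrow> sign s = -1) \<longleftrightarrow> parity_sign (s, d) = 1" for s :: "nat \<Rightarrow> nat" and d
    by (cases s rule: sign_cases) (auto simp: parity_sign_def)
  show ?thesis
    unfolding hatS_def DirProd_def sym_group_def integer_group_def kernel_def sign_img_def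
    using parity by auto
qed

lemma group_hatS: "group (hatS n)"
  unfolding hatS_eq_kernel_parity_sign
  by (rule group.subgroup_imp_group[OF DirProd_group[OF sym_group_is_group group_integer_group]
        group_hom.subgroup_kernel[OF parity_sign_group_hom]])

lemma carrier_hatS: "(s, d) \<in> carrier (hatS n) \<longleftrightarrow> s permutes {1..n} \<and> (odd d \<longleftrightarrow> sign s = -1)"
  by (simp add: hatS_def)

lemma one_hatS: "\<one>\<^bsub>hatS n\<^esub> = (id, 0)"
  by (simp add: hatS_def)

lemma mult_hatS: "x \<otimes>\<^bsub>hatS n\<^esub> y = (fst x \<circ> fst y, snd x + snd y)"
  by (simp add: hatS_def split_def)

lemma hatS_same_perm_even_diff:
  "(s, d) \<in> carrier (hatS n) \<Longrightarrow> (s, e) \<in> carrier (hatS n) \<Longrightarrow> even (d - e)"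
  by (auto simp: carrier_hatS)

lemma word_img_Nil [simp]: "word_img [] = (id, 0)"
  by (simp add: word_img_def)

lemma word_img_Cons [simp]:
  "word_img (l # w) = (transpose (fst l) (fst l + 1) \<circ> fst (word_img w),
     (if snd l then 1 else -1) + snd (word_img w))"
  by (simp add: word_img_def split_def letter_img_def)

lemma word_img_append:
  "word_img (a @ b) = (fst (word_img a) \<circ> fst (word_img b), snd (word_img a) + snd (word_img b))"
  by (induction a) (auto simp: comp_assoc)

lemma word_img_braid_eq: "braid_eq n v w \<Longrightarrow> word_img v = word_img w"
proof (induction rule: braid_eq.induct)
  case (ctxt v w a b)
  then show ?case
    by (simp add: word_img_append)
next
  case (cancel i e)
  then show ?case
    by (simp add: comp_assoc[symmetric])
next
  case (far_comm i j)
  then show ?case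
    by (auto simp: fun_eq_iff transpose_def)
next
  case (braid i)
  then show ?case
    by (auto simp: fun_eq_iff transpose_def)
qed auto

lemma p_braid_class:
  assumes "valid_word n w"
  shows "p n (braid_class n w) = word_img w"
proof -
  have "rep (braid_class n w) \<in> braid_class n w"
    unfolding rep_def using mem_braid_class[OF assms] by (rule someI)
  then have "braid_eq n w (rep (braid_class n w))"
    by (simp add: braid_class_def)
  then show ?thesis
    using word_img_braid_eq by (metis p_def)
qed

lemma permutation_word_img: "permutation (fst (word_img w))"
  by (induction w)
    (simp_all only: word_img_Nil word_img_Cons fst_conv permutation_id permutation_compose
      permutation_swap_id)

lemma word_img_permutes: "valid_word n w \<Longrightarrow> fst (word_img w) permutes {1..n}"
  by (induction w) (auto simp: valid_word_def permutes_id intro!: permutes_compose permutes_swap_id)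

lemma sign_word_img: "sign (fst (word_img w)) = (-1) ^ length w"
proof (induction w)
  case Nil
  then show ?case
    by simp
next
  case (Cons l w)
  have "sign (fst (word_img (l # w))) = sign (transpose (fst l) (fst l + 1)) * sign (fst (word_img w))"
    unfolding word_img_Cons fst_conv by (rule sign_compose[OF permutation_swap_id permutation_word_img])
  also have "\<dots> = (-1) ^ length (l # w)"
    using Cons.IH by (simp add: sign_swap_id)
  finally show ?case .
qed

lemma snd_word_img: "snd (word_img w) = exp_sum w"
  by (induction w) (auto simp: exp_sum_def)

lemma even_exp_sum_iff: "even (exp_sum w) \<longleftrightarrow> even (length w)"
  by (induction w) (auto simp: exp_sum_def)

lemma word_img_in_carrier_hatS:
  assumes "valid_word n w"
  shows "word_img w \<in> carrier (hatS n)"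
proof -
  have "(fst (word_img w), snd (word_img w)) \<in> carrier (hatS n)"
    using word_img_permutes[OF assms]
    by (simp add: carrier_hatS snd_word_img even_exp_sum_iff sign_word_img minus_one_power_iff)
  then show ?thesis
    by simp
qed

lemma p_is_hom: "p n \<in> hom (Br n) (hatS n)"
proof (rule homI)
  fix A assume "A \<in> carrier (Br n)"
  then show "p n A \<in> carrier (hatS n)"
    by (elim carrier_BrE) (simp add: p_braid_class word_img_in_carrier_hatS)
next
  fix A B assume "A \<in> carrier (Br n)" "B \<in> carrier (Br n)"
  then show "p n (A \<otimes>\<^bsub>Br n\<^esub> B) = p n A \<otimes>\<^bsub>hatS n\<^esub> p n B"
    by (elim carrier_BrE) (simp add: mult_Br_braid_class p_braid_class word_img_append mult_hatS)
qed

lemma ex_valid_word_transpose: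
  "1 \<le> a \<Longrightarrow> a < b \<Longrightarrow> b \<le> n \<Longrightarrow> \<exists>w. valid_word n w \<and> fst (word_img w) = transpose a b"
proof (induction b)
  case 0
  then show ?case
    by simp
next
  case (Suc b)
  show ?case
  proof (cases "a = b")
    case True
    then show ?thesis
      using Suc.prems by (intro exI[of _ "[(a, True)]"]) (auto simp: valid_word_def)
  next
    case False
    then have "a < b"
      using Suc.prems by simp
    then obtain w where w: "valid_word n w" "fst (word_img w) = transpose a b"
      using Suc by auto
    have "transpose b (Suc b) \<circ> transpose a b \<circ> transpose b (Suc b) = transpose a (Suc b)"
      using transpose_comp_triple[of "Suc b" a b] \<open>a < b\<close> by (simp add: transpose_commute)
    then have "fst (word_img ([(b, True)] @ w @ [(b, True)])) = transpose a (Suc b)"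
      using w(2) by (simp add: word_img_append comp_assoc)
    moreover have "valid_word n ([(b, True)] @ w @ [(b, True)])"
      using w(1) Suc.prems \<open>a < b\<close> by (auto simp: valid_word_def)
    ultimately show ?thesis
      by blast
  qed
qed

lemma ex_valid_word_perm:
  assumes "s permutes {1..n}"
  shows "\<exists>w. valid_word n w \<and> fst (word_img w) = s"
  using assms finite_atLeastAtMost
proof (induction rule: permutes_induct)
  case id
  show ?case
    by (intro exI[of _ "[]"]) simp
next
  case (swap a b q)
  obtain w where w: "valid_word n w" "fst (word_img w) = q"
    using swap.IH by blast
  have "\<exists>v. valid_word n v \<and> fst (word_img v) = transpose a b"
    using swap.hyps ex_valid_word_transpose[of a b n] ex_valid_word_transpose[of b a n]
    by (cases a b rule: linorder_cases) (auto simp: transpose_commute)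
  then obtain v where v: "valid_word n v" "fst (word_img v) = transpose a b"
    by blast
  show ?case
    using v w by (intro exI[of _ "v @ w"]) (simp add: word_img_append)
qed

lemma word_img_replicate_even:
  "word_img (replicate (2 * m) (i, e)) = (id, (if e then 2 else -2) * int m)"
  by (induction m) (auto simp: comp_assoc[symmetric] algebra_simps)

lemma p_image_carrier:
  assumes "2 \<le> n"
  shows "p n ` carrier (Br n) = carrier (hatS n)"
proof
  show "p n ` carrier (Br n) \<subseteq> carrier (hatS n)"
    by (rule hom_carrier[OF p_is_hom])
next
  show "carrier (hatS n) \<subseteq> p n ` carrier (Br n)"
  proof (clarify)
    fix s d assume sd: "(s, d) \<in> carrier (hatS n)"
    then obtain w where w: "valid_word n w" "fst (word_img w) = s"
      using ex_valid_word_perm by (auto simp: carrier_hatS)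
    then have "(s, snd (word_img w)) \<in> carrier (hatS n)"
      using word_img_in_carrier_hatS by (metis prod.collapse)
    then obtain k where k: "d = snd (word_img w) + 2 * k"
      using hatS_same_perm_even_diff[OF sd] by (metis add.commute diff_add_cancel evenE)
    define v where "v = w @ replicate (2 * nat \<bar>k\<bar>) (1, 0 \<le> k)"
    have "valid_word n v"
      using w(1) assms by (auto simp: v_def valid_word_def)
    moreover have "word_img v = (s, d)"
      using w(2) k by (simp add: v_def word_img_append word_img_replicate_even)
    ultimately show "(s, d) \<in> p n ` carrier (Br n)"
      using p_braid_class braid_class_in_carrier_Br by (metis image_eqI)
  qed
qed

lemma even_exp_sum_if_pure: "fst (word_img w) = id \<Longrightarrow> even (exp_sum w)"
  using sign_word_img[of w] by (simp add: even_exp_sum_iff minus_one_power_iff split: if_splits)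

lemma kernel_p: "kernel (Br n) (hatS n) (p n) = hatPBr n"
proof -
  have "p n A = (id, 0) \<longleftrightarrow> fst (word_img (rep A)) = id \<and> qhom A = 0" for A
  proof (cases "fst (word_img (rep A)) = id")
    case True
    then obtain c where "exp_sum (rep A) = 2 * c"
      using even_exp_sum_if_pure by blast
    with True show ?thesis
      by (simp add: p_def prod_eq_iff snd_word_img qhom_def)
  next
    case False
    then show ?thesis
      by (auto simp: p_def)
  qed
  then show ?thesis
    by (auto simp: kernel_def hatPBr_def PBr_def one_hatS)
qed

theorem mainTheorem15:
  fixes n :: nat
  assumes "n \<ge> 2"
  shows "group (Br n) \<and> group (hatS n) \<and> p n \<in> hom (Br n) (hatS n) \<and>
         p n ` carrier (Br n) = carrier (hatS n) \<and>
         kernel (Br n) (hatS n) (p n) = hatPBr n"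
  using group_Br group_hatS p_is_hom p_image_carrier[OF assms] kernel_p by blast

end
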